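(* For every integer $n\ge1$ and every $f\in\mathcal{E}_n^-$, $$\int_0^\infty |f(t)|^2e^{-t}\,dt \le \left(1+8190\,e^{-n/10}\right)\int_0^{9n}|f(t)|^2e^{-t}\,dt.$$ In particular this holds for every $f\in\mathcal{T}_n$.
   Context: $\mathcal{E}_n^-$ denotes the set of all functions $f(t)=\sum_{j=1}^n a_j e^{\lambda_j t}$ ($t\in\mathbb{R}$) with $a_j,\lambda_j\in\mathbb{C}$ and $\mathrm{Re}(\lambda_j)\le 0$ for all $j$. $\mathcal{T}_n$ denotes the set of all functions $f(t)=\sum_{j=1}^n a_j e^{i\lambda_j t}$ with $a_j\in\mathbb{C}$ (possibly zero) and real $\lambda_1<\cdots<\lambda_n$. *)

theory Defs
  imports "HOL-Analysis.Analysis"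
begin

text \<open>The class E_n^-: exponential sums with n terms whose exponents have
  nonpositive real part (indices 0..n-1 instead of 1..n).\<close>
definition E_minus :: "nat \<Rightarrow> (real \<Rightarrow> complex) set" where
  "E_minus n = {f. \<exists>(a::nat \<Rightarrow> complex) (lam::nat \<Rightarrow> complex).
      (\<forall>j<n. Re (lam j) \<le> 0) \<and>
      f = (\<lambda>t. \<Sum>j<n. a j * exp (lam j * complex_of_real t))}"

definition T_class :: "nat \<Rightarrow> (real \<Rightarrow> complex) set" where
  "T_class n = {f. \<exists>(a::nat \<Rightarrow> complex) (lam::nat \<Rightarrow> real).
      strict_mono_on {..<n} lam \<and>
      f = (\<lambda>t. \<Sum>j<n. a j * exp (\<i> * complex_of_real (lam j) * complex_of_real t))}"

end

theory Submission
  imports Defs "HOL-Computational_Algebra.Formal_Power_Series"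
begin

text \<open>
  Write \<open>f(m + t) e^(-(m + t)/2) = \<Sum>j. c_j \<rho>_j^m\<close> with \<open>\<rho>_j = e^(\<lambda>_j - 1/2)\<close>, so that
  \<open>|\<rho>_j| \<le> e^(-1/2) < 8/13\<close>. Such a power sum \<open>u\<close> satisfies the linear recurrence with
  characteristic polynomial \<open>\<Prod>j. 1 - \<rho>_j X\<close>, hence its generating function is a polynomial
  of degree \<open>< n\<close>, determined by \<open>u_0, \<dots>, u_(n-1)\<close>, divided by that product. Comparing
  coefficients with the majorant \<open>((1 + rX)/(1 - rX))^n\<close> and evaluating it at \<open>s = 7/5\<close> gives
  \<open>|u_k| \<le> (121/9)^n (5/7)^k \<Sum>i<n. |u_i| (7/5)^i\<close> for \<open>k \<ge> n\<close>. Integrating over unit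
  blocks \<open>[k, k + 1]\<close>, each block beyond \<open>9n\<close> is dominated by the first \<open>n\<close> blocks times a
  geometrically decaying factor, and these factors sum to at most \<open>8190 e^(-n/10)\<close>.
\<close>

unbundle no vec_syntax and fps_syntax

definition fps_geometric :: "'a::comm_ring_1 \<Rightarrow> 'a fps" where
  "fps_geometric c = Abs_fps (\<lambda>k. c ^ k)"

lemma fps_geometric_inverse: "(1 - fps_const c * fps_X) * fps_geometric c = 1"
proof (rule fps_ext)
  fix k
  have "((1 - fps_const c * fps_X) * fps_geometric c) $ k
      = fps_geometric c $ k - c * (fps_X * fps_geometric c) $ k"
    by (simp add: algebra_simps)
  also have "\<dots> = (1 :: 'a fps) $ k"
    by (cases k) (auto simp: fps_geometric_def)
  finally show "((1 - fps_const c * fps_X) * fps_geometric c) $ k = (1 :: 'a fps) $ k" .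
qed

lemma fps_nth_prod_linear_eq_0:
  fixes \<rho> :: "'b \<Rightarrow> 'a::comm_ring_1"
  assumes "finite A" "card A < k"
  shows "(\<Prod>i\<in>A. 1 - fps_const (\<rho> i) * fps_X) $ k = 0"
  using assms
proof (induction A arbitrary: k rule: finite_induct)
  case (insert x F)
  let ?Q = "\<Prod>i\<in>F. 1 - fps_const (\<rho> i) * fps_X"
  have "(\<Prod>i\<in>insert x F. 1 - fps_const (\<rho> i) * fps_X) $ k = ?Q $ k - \<rho> x * (fps_X * ?Q) $ k"
    using insert.hyps by (simp add: algebra_simps)
  also have "\<dots> = 0"
    using insert by (cases k) auto
  finally show ?case .
qed simp

definition fps_majorized :: "'a::real_normed_field fps \<Rightarrow> real fps \<Rightarrow> bool" where
  "fps_majorized a A \<longleftrightarrow> (\<forall>k. norm (a $ k) \<le> A $ k)"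

lemma fps_majorized_nonneg: "fps_majorized a A \<Longrightarrow> 0 \<le> A $ k"
  unfolding fps_majorized_def by (meson norm_ge_zero order_trans)

lemma fps_majorized_mult:
  assumes "fps_majorized a A" "fps_majorized b B"
  shows "fps_majorized (a * b) (A * B)"
  unfolding fps_majorized_def
proof
  fix k
  have "norm ((a * b) $ k) \<le> (\<Sum>i=0..k. norm (a $ i) * norm (b $ (k - i)))"
    unfolding fps_mult_nth by (rule order_trans[OF norm_sum]) (simp add: norm_mult)
  also have "\<dots> \<le> (\<Sum>i=0..k. A $ i * B $ (k - i))"
    using assms fps_majorized_nonneg[OF assms(1)] unfolding fps_majorized_def
    by (intro sum_mono mult_mono) auto
  finally show "norm ((a * b) $ k) \<le> (A * B) $ k"
    by (simp add: fps_mult_nth)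
qed

lemma fps_majorized_prod:
  "(\<And>j. j \<in> S \<Longrightarrow> fps_majorized (a j) (A j)) \<Longrightarrow> fps_majorized (\<Prod>j\<in>S. a j) (\<Prod>j\<in>S. A j)"
proof (induction S rule: infinite_finite_induct)
  case (insert x F)
  then show ?case by (simp add: fps_majorized_mult)
qed (auto simp: fps_majorized_def)

lemma fps_majorized_linear:
  "norm c \<le> r \<Longrightarrow> fps_majorized (1 - fps_const c * fps_X) (1 + fps_const r * fps_X)"
  unfolding fps_majorized_def by auto

lemma fps_majorized_geometric:
  "norm c \<le> r \<Longrightarrow> fps_majorized (fps_geometric c) (fps_geometric r)"
  unfolding fps_majorized_def fps_geometric_def by (auto simp: norm_power power_mono)

definition fps_nonneg :: "real fps \<Rightarrow> bool" where
  "fps_nonneg A \<longleftrightarrow> (\<forall>j. 0 \<le> A $ j)"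

lemma fps_nonneg_mult: "fps_nonneg A \<Longrightarrow> fps_nonneg B \<Longrightarrow> fps_nonneg (A * B)"
  unfolding fps_nonneg_def by (auto simp: fps_mult_nth intro!: sum_nonneg)

lemma fps_nonneg_power: "fps_nonneg A \<Longrightarrow> fps_nonneg (A ^ n)"
  by (induction n) (auto simp: fps_nonneg_mult, simp add: fps_nonneg_def)

definition fps_partial_eval :: "nat \<Rightarrow> real \<Rightarrow> real fps \<Rightarrow> real" where
  "fps_partial_eval N s A = (\<Sum>j\<le>N. A $ j * s ^ j)"

lemma fps_partial_eval_nonneg: "fps_nonneg A \<Longrightarrow> 0 \<le> s \<Longrightarrow> 0 \<le> fps_partial_eval N s A"
  unfolding fps_partial_eval_def fps_nonneg_def by (auto intro!: sum_nonneg)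

lemma fps_nth_le_partial_eval:
  "fps_nonneg A \<Longrightarrow> 0 \<le> s \<Longrightarrow> A $ N * s ^ N \<le> fps_partial_eval N s A"
  unfolding fps_partial_eval_def fps_nonneg_def by (intro member_le_sum) auto

lemma fps_partial_eval_mult_le:
  assumes A: "fps_nonneg A" and B: "fps_nonneg B" and s: "0 \<le> s"
  shows "fps_partial_eval N s (A * B) \<le> fps_partial_eval N s A * fps_partial_eval N s B"
proof -
  let ?a = "\<lambda>i. A $ i * s ^ i" and ?b = "\<lambda>j. B $ j * s ^ j"
  have "fps_partial_eval N s (A * B) = (\<Sum>k\<le>N. \<Sum>i\<le>k. ?a i * ?b (k - i))"
    unfolding fps_partial_eval_def fps_mult_nth atLeast0AtMost
    by (intro sum.cong refl) (auto simp: sum_distrib_right power_add[symmetric] intro!: sum.cong)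
  also have "\<dots> = (\<Sum>(i,j)\<in>{(i,j). i + j \<le> N}. ?a i * ?b j)"
    by (rule sum.triangle_reindex_eq[symmetric])
  also have "\<dots> \<le> (\<Sum>(i,j)\<in>{..N} \<times> {..N}. ?a i * ?b j)"
    using A B s unfolding fps_nonneg_def by (intro sum_mono2) auto
  also have "\<dots> = fps_partial_eval N s A * fps_partial_eval N s B"
    unfolding fps_partial_eval_def by (simp add: sum_product sum.cartesian_product)
  finally show ?thesis .
qed

lemma fps_partial_eval_power_le:
  assumes A: "fps_nonneg A" and s: "0 \<le> s"
  shows "fps_partial_eval N s (A ^ n) \<le> fps_partial_eval N s A ^ n"
proof (induction n)
  case 0
  show ?case by (simp add: fps_partial_eval_def sum.atMost_shift)
next
  case (Suc n)
  have "fps_partial_eval N s (A ^ Suc n) \<le> fps_partial_eval N s A * fps_partial_eval N s (A ^ n)"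
    using fps_partial_eval_mult_le[OF A fps_nonneg_power[OF A] s] by simp
  also have "\<dots> \<le> fps_partial_eval N s A * fps_partial_eval N s A ^ n"
    using Suc fps_partial_eval_nonneg[OF A s] by (intro mult_left_mono) auto
  finally show ?case by simp
qed

lemma fps_partial_eval_linear:
  "fps_partial_eval N s (1 + fps_const r * fps_X) = (if N = 0 then 1 else 1 + r * s)"
  by (induction N) (auto simp: fps_partial_eval_def)

lemma fps_partial_eval_geometric_le:
  assumes "0 \<le> r" "0 \<le> s" "r * s < 1"
  shows "fps_partial_eval N s (fps_geometric r) \<le> 1 / (1 - r * s)"
proof -
  have "fps_partial_eval N s (fps_geometric r) = (1 - (r * s) ^ Suc N) / (1 - r * s)"
    using assms by (simp add: fps_partial_eval_def fps_geometric_def sum_gp0 flip: power_mult_distrib)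
  also have "\<dots> \<le> 1 / (1 - r * s)"
    using assms by (intro divide_right_mono) auto
  finally show ?thesis .
qed

text \<open>A Cauchy-type estimate for the coefficients of the majorant
  \<open>((1 + r X) / (1 - r X))^n\<close>, proved by evaluating truncations at \<open>s\<close>.\<close>
lemma fps_nth_linear_geometric_power_le:
  fixes r s :: real
  assumes r: "0 \<le> r" and s: "0 < s" and rs: "r * s < 1"
  shows "(((1 + fps_const r * fps_X) * fps_geometric r) ^ n) $ j \<le> ((1 + r * s) / (1 - r * s)) ^ n / s ^ j"
proof -
  let ?L = "1 + fps_const r * fps_X" and ?G = "fps_geometric r"
  have L: "fps_nonneg ?L" and G: "fps_nonneg ?G"
    using r by (auto simp: fps_nonneg_def fps_geometric_def)
  have LG: "fps_nonneg (?L * ?G)" by (rule fps_nonneg_mult[OF L G])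
  have "fps_partial_eval j s (?L * ?G) \<le> fps_partial_eval j s ?L * fps_partial_eval j s ?G"
    using fps_partial_eval_mult_le[OF L G] s by simp
  also have "\<dots> \<le> (1 + r * s) * (1 / (1 - r * s))"
    using r s rs fps_partial_eval_nonneg[OF G, of s j]
    by (intro mult_mono fps_partial_eval_geometric_le) (auto simp: fps_partial_eval_linear)
  finally have eval_LG: "fps_partial_eval j s (?L * ?G) \<le> (1 + r * s) / (1 - r * s)" by simp
  have "((?L * ?G) ^ n) $ j * s ^ j \<le> fps_partial_eval j s ((?L * ?G) ^ n)"
    using s by (intro fps_nth_le_partial_eval fps_nonneg_power LG) auto
  also have "\<dots> \<le> fps_partial_eval j s (?L * ?G) ^ n"
    using s by (intro fps_partial_eval_power_le LG) auto
  also have "\<dots> \<le> ((1 + r * s) / (1 - r * s)) ^ n"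
    using eval_LG s by (intro power_mono fps_partial_eval_nonneg LG) auto
  finally show ?thesis
    using s by (simp add: pos_le_divide_eq)
qed

lemma fps_nth_char_poly_mult_power_sum_eq_0:
  fixes c \<rho> :: "nat \<Rightarrow> 'a::comm_ring_1"
  assumes "n \<le> k"
  shows "((\<Prod>j<n. 1 - fps_const (\<rho> j) * fps_X) * Abs_fps (\<lambda>m. \<Sum>j<n. c j * \<rho> j ^ m)) $ k = 0"
proof -
  let ?P = "\<Prod>j<n. 1 - fps_const (\<rho> j) * fps_X"
  have factor: "?P * fps_geometric (\<rho> j) = (\<Prod>i\<in>{..<n} - {j}. 1 - fps_const (\<rho> i) * fps_X)"
    if "j < n" for j
  proof -
    have "?P * fps_geometric (\<rho> j)
        = (1 - fps_const (\<rho> j) * fps_X) * (\<Prod>i\<in>{..<n} - {j}. 1 - fps_const (\<rho> i) * fps_X)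
          * fps_geometric (\<rho> j)"
      using that by (simp add: prod.remove)
    also have "\<dots> = (1 - fps_const (\<rho> j) * fps_X) * fps_geometric (\<rho> j)
          * (\<Prod>i\<in>{..<n} - {j}. 1 - fps_const (\<rho> i) * fps_X)"
      by (simp only: ac_simps)
    finally show ?thesis
      by (simp add: fps_geometric_inverse)
  qed
  have "Abs_fps (\<lambda>m. \<Sum>j<n. c j * \<rho> j ^ m) = (\<Sum>j<n. fps_const (c j) * fps_geometric (\<rho> j))"
    by (rule fps_ext) (simp add: fps_geometric_def fps_sum_nth)
  then have "?P * Abs_fps (\<lambda>m. \<Sum>j<n. c j * \<rho> j ^ m)
      = (\<Sum>j<n. fps_const (c j) * (?P * fps_geometric (\<rho> j)))"
    by (simp add: sum_distrib_left sum_distrib_right ac_simps)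
  then show ?thesis
    using assms by (auto simp: fps_sum_nth factor fps_nth_prod_linear_eq_0 intro!: sum.neutral)
qed

lemma power_sum_fps_majorized:
  fixes c \<rho> :: "nat \<Rightarrow> 'a::real_normed_field"
  assumes \<rho>: "\<And>j. j < n \<Longrightarrow> norm (\<rho> j) \<le> r"
  defines "u \<equiv> \<lambda>m. \<Sum>j<n. c j * \<rho> j ^ m"
  shows "fps_majorized (Abs_fps u)
           (Abs_fps (\<lambda>m. if m < n then norm (u m) else 0) * ((1 + fps_const r * fps_X) * fps_geometric r) ^ n)"
proof -
  define P where "P = (\<Prod>j<n. 1 - fps_const (\<rho> j) * fps_X)"
  define G where "G = (\<Prod>j<n. fps_geometric (\<rho> j))"
  define H where "H = Abs_fps (\<lambda>m. if m < n then norm (u m) else 0)"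
  define E where "E = (1 + fps_const r * fps_X) ^ n"
  have P_high: "(P * Abs_fps u) $ k = 0" if "n \<le> k" for k
    unfolding P_def u_def using that by (rule fps_nth_char_poly_mult_power_sum_eq_0)
  have P_low: "(P * Abs_fps u) $ k = (P * Abs_fps (\<lambda>m. if m < n then u m else 0)) $ k" if "k < n" for k
    unfolding fps_mult_nth using that by (intro sum.cong refl) auto
  have "fps_majorized P (\<Prod>j<n. 1 + fps_const r * fps_X)"
    unfolding P_def using \<rho> by (intro fps_majorized_prod fps_majorized_linear) auto
  moreover have "fps_majorized (Abs_fps (\<lambda>m. if m < n then u m else 0)) H"
    by (simp add: fps_majorized_def H_def)
  ultimately have PH: "fps_majorized (P * Abs_fps (\<lambda>m. if m < n then u m else 0)) (E * H)"
    unfolding E_def by (simp add: fps_majorized_mult)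
  have "fps_majorized (P * Abs_fps u) (E * H)"
    unfolding fps_majorized_def
  proof
    fix k
    show "norm ((P * Abs_fps u) $ k) \<le> (E * H) $ k"
      using PH fps_majorized_nonneg[OF PH, of k]
      by (cases "k < n") (auto simp: P_low P_high fps_majorized_def)
  qed
  moreover have "fps_majorized G (\<Prod>j<n. fps_geometric r)"
    unfolding G_def using \<rho> by (intro fps_majorized_prod fps_majorized_geometric) auto
  ultimately have "fps_majorized (P * Abs_fps u * G) (E * H * (\<Prod>j<n. fps_geometric r))"
    by (rule fps_majorized_mult)
  moreover have "P * G = 1"
    unfolding P_def G_def by (simp add: prod.distrib[symmetric] fps_geometric_inverse)
  then have "P * Abs_fps u * G = Abs_fps u"
    by (metis mult.commute mult.left_commute mult_1_right)
  moreover have "E * H * (\<Prod>j<n. fps_geometric r) = H * ((1 + fps_const r * fps_X) * fps_geometric r) ^ n"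
    unfolding E_def by (simp add: power_mult_distrib ac_simps)
  ultimately show ?thesis
    unfolding H_def by (simp only:)
qed

lemma power_sum_norm_le:
  fixes c \<rho> :: "nat \<Rightarrow> 'a::real_normed_field" and r s :: real
  assumes \<rho>: "\<And>j. j < n \<Longrightarrow> norm (\<rho> j) \<le> r"
    and r: "0 \<le> r" and s: "0 < s" and rs: "r * s < 1" and k: "n \<le> k"
  defines "u \<equiv> \<lambda>m. \<Sum>j<n. c j * \<rho> j ^ m"
  shows "norm (u k) \<le> ((1 + r * s) / (1 - r * s)) ^ n / s ^ k * (\<Sum>i<n. norm (u i) * s ^ i)"
proof -
  define F where "F = ((1 + r * s) / (1 - r * s)) ^ n"
  define W where "W = ((1 + fps_const r * fps_X) * fps_geometric r) ^ n"
  have "fps_majorized (Abs_fps u) (Abs_fps (\<lambda>m. if m < n then norm (u m) else 0) * W)"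
    unfolding u_def W_def by (rule power_sum_fps_majorized[OF \<rho>])
  then have "norm (u k) \<le> (Abs_fps (\<lambda>m. if m < n then norm (u m) else 0) * W) $ k"
    unfolding fps_majorized_def by (metis fps_nth_Abs_fps)
  also have "\<dots> = (\<Sum>i<n. norm (u i) * W $ (k - i))"
    unfolding fps_mult_nth by (rule sum.mono_neutral_cong_right) (use k in auto)
  also have "\<dots> \<le> (\<Sum>i<n. norm (u i) * (F / s ^ (k - i)))"
    unfolding W_def F_def
    by (intro sum_mono mult_left_mono fps_nth_linear_geometric_power_le r s rs norm_ge_zero)
  also have "\<dots> = F / s ^ k * (\<Sum>i<n. norm (u i) * s ^ i)"
    unfolding sum_distrib_left
  proof (intro sum.cong refl)
    fix i assume "i \<in> {..<n}"
    then have "s ^ k = s ^ (k - i) * s ^ i"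
      using k by (simp flip: power_add)
    then show "norm (u i) * (F / s ^ (k - i)) = F / s ^ k * (norm (u i) * s ^ i)"
      using s by simp
  qed
  finally show ?thesis unfolding F_def .
qed

definition exp_sum :: "nat \<Rightarrow> (nat \<Rightarrow> complex) \<Rightarrow> (nat \<Rightarrow> complex) \<Rightarrow> real \<Rightarrow> complex" where
  "exp_sum n a lam t = (\<Sum>j<n. a j * exp (lam j * complex_of_real t))"

definition exp_sum_weight :: "nat \<Rightarrow> (nat \<Rightarrow> complex) \<Rightarrow> (nat \<Rightarrow> complex) \<Rightarrow> real \<Rightarrow> real" where
  "exp_sum_weight n a lam t = (cmod (exp_sum n a lam t))\<^sup>2 * exp (- t)"

lemma exp_sum_weight_nonneg: "0 \<le> exp_sum_weight n a lam t"
  by (simp add: exp_sum_weight_def)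

lemma continuous_on_exp_sum_weight: "continuous_on A (exp_sum_weight n a lam)"
  unfolding exp_sum_weight_def exp_sum_def by (intro continuous_intros)

lemma exp_sum_weight_shift_eq:
  "exp_sum_weight n a lam (real m + t)
     = (norm (\<Sum>j<n. (a j * exp ((lam j - 1/2) * complex_of_real t)) * exp (lam j - 1/2) ^ m))\<^sup>2"
proof -
  have term_eq: "exp (lam j * complex_of_real (real m + t)) * complex_of_real (exp (- (real m + t) / 2))
        = exp ((lam j - 1/2) * complex_of_real t) * exp (lam j - 1/2) ^ m" for j
  proof -
    have "exp (lam j * complex_of_real (real m + t)) * complex_of_real (exp (- (real m + t) / 2))
       = exp (lam j * complex_of_real (real m + t) + complex_of_real (- (real m + t) / 2))"
      by (simp add: exp_add flip: exp_of_real)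
    also have "lam j * complex_of_real (real m + t) + complex_of_real (- (real m + t) / 2)
        = (lam j - 1/2) * complex_of_real t + of_nat m * (lam j - 1/2)"
      by (simp add: algebra_simps add_divide_distrib diff_divide_distrib)
    also have "exp \<dots> = exp ((lam j - 1/2) * complex_of_real t) * exp (lam j - 1/2) ^ m"
      by (simp add: exp_add exp_of_nat_mult)
    finally show ?thesis .
  qed
  have "exp (- (real m + t)) = (exp (- (real m + t) / 2))\<^sup>2"
    by (simp add: power2_eq_square flip: exp_add)
  then have "exp_sum_weight n a lam (real m + t)
      = (cmod (exp_sum n a lam (real m + t) * complex_of_real (exp (- (real m + t) / 2))))\<^sup>2"
    by (simp add: exp_sum_weight_def norm_mult power_mult_distrib)
  also have "exp_sum n a lam (real m + t) * complex_of_real (exp (- (real m + t) / 2))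
      = (\<Sum>j<n. (a j * exp ((lam j - 1/2) * complex_of_real t)) * exp (lam j - 1/2) ^ m)"
    by (simp add: exp_sum_def sum_distrib_right mult.assoc flip: term_eq)
  finally show ?thesis .
qed

text \<open>The constants come from \<open>r = 8/13\<close> and \<open>s = 7/5\<close>: \<open>(1 + rs)/(1 - rs) = 121/9\<close> and
  \<open>s\<^sup>2 = 49/25\<close>; the sum over \<open>i < n\<close> is the Cauchy--Schwarz factor.\<close>
definition sample_constant :: "nat \<Rightarrow> nat \<Rightarrow> real" where
  "sample_constant n k = (121/9) ^ (2 * n) * (\<Sum>i<n. (49/25) ^ i) / (49/25) ^ k"

lemma exp_sum_weight_sample_le:
  assumes lam: "\<And>j. j < n \<Longrightarrow> Re (lam j) \<le> 0" and k: "n \<le> k"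
  shows "exp_sum_weight n a lam (real k + t)
           \<le> sample_constant n k * (\<Sum>i<n. exp_sum_weight n a lam (real i + t))"
proof -
  define u where "u = (\<lambda>m. \<Sum>j<n. (a j * exp ((lam j - 1/2) * complex_of_real t)) * exp (lam j - 1/2) ^ m)"
  define s :: real where "s = 7/5"
  have \<rho>: "norm (exp (lam j - 1/2)) \<le> 8/13" if "j < n" for j
  proof -
    have "norm (exp (lam j - 1/2)) \<le> exp (- (1/2) :: real)"
      using lam[OF that] by simp
    also have "exp (1/2 :: real) \<ge> 13/8"
      using exp_lower_Taylor_quadratic[of "1/2"] by (simp add: power2_eq_square)
    then have "exp (- (1/2) :: real) \<le> 8/13"
      by (simp add: exp_minus field_simps)
    finally show ?thesis .
  qed
  have "norm (u k) \<le> ((1 + 8/13 * s) / (1 - 8/13 * s)) ^ n / s ^ k * (\<Sum>i<n. norm (u i) * s ^ i)"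
    unfolding u_def by (rule power_sum_norm_le) (use \<rho> k in \<open>auto simp: s_def\<close>)
  then have "(norm (u k))\<^sup>2 \<le> ((121/9) ^ n / s ^ k)\<^sup>2 * (\<Sum>i<n. norm (u i) * s ^ i)\<^sup>2"
    by (simp add: s_def power_mono power_mult_distrib flip: power_mult_distrib)
  also have "\<dots> \<le> ((121/9) ^ n / s ^ k)\<^sup>2 * ((\<Sum>i<n. (norm (u i))\<^sup>2) * (\<Sum>i<n. (s ^ i)\<^sup>2))"
    by (intro mult_left_mono Cauchy_Schwarz_ineq_sum) auto
  also have "\<dots> = sample_constant n k * (\<Sum>i<n. (norm (u i))\<^sup>2)"
  proof -
    have sq: "(x ^ m)\<^sup>2 = (x\<^sup>2) ^ m" for x :: real and m :: nat
      by (metis power_mult mult.commute)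
    have s_squared: "s\<^sup>2 = 49/25"
      by (simp add: s_def power2_eq_square)
    have "((121/9) ^ n / s ^ k)\<^sup>2 = (121/9) ^ (2 * n) / (49/25) ^ k"
      by (simp only: power_divide sq power_mult s_squared)
    moreover have "(\<Sum>i<n. (s ^ i)\<^sup>2) = (\<Sum>i<n. (49/25) ^ i)"
      by (simp only: sq s_squared)
    ultimately show ?thesis
      by (simp add: sample_constant_def)
  qed
  finally show ?thesis
    by (simp add: u_def exp_sum_weight_shift_eq)
qed

lemma sum_power_tail_le:
  fixes x :: real
  assumes "0 \<le> x" "x < 1"
  shows "(\<Sum>k\<in>{m..<N}. x ^ k) \<le> x ^ m / (1 - x)"
proof (cases "m \<le> N")
  case True
  then obtain d where N: "N = d + m"
    by (metis le_add_diff_inverse2)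
  have "(\<Sum>k\<in>{m..<N}. x ^ k) = x ^ m * (\<Sum>k<d. x ^ k)"
    unfolding N using sum.shift_bounds_nat_ivl[of "\<lambda>k. x ^ k" 0 m d]
    by (simp add: power_add sum_distrib_left atLeast0LessThan mult.commute)
  also have "\<dots> = x ^ m * ((1 - x ^ d) / (1 - x))"
    using assms by (simp add: sum_gp_strict)
  also have "\<dots> \<le> x ^ m / (1 - x)"
    using assms by (simp add: divide_right_mono mult_left_le)
  finally show ?thesis .
qed (use assms in simp)

lemma sum_sample_constant_le:
  "(\<Sum>k\<in>{9 * n..<N}. sample_constant n k) \<le> 8190 * exp (- real n / 10)"
proof -
  have "(\<Sum>i<n. (49/25 :: real) ^ i) = (1 - (49/25) ^ n) / (1 - 49/25)"
    by (subst sum_gp_strict) simp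
  also have "\<dots> \<le> (49/25) ^ n * (25/24)"
    by (simp add: field_simps)
  finally have head: "(\<Sum>i<n. (49/25 :: real) ^ i) \<le> (49/25) ^ n * (25/24)" .
  have tail: "(\<Sum>k\<in>{9 * n..<N}. (25/49 :: real) ^ k) \<le> (25/49) ^ (9 * n) * (49/24)"
    using sum_power_tail_le[of "25/49" "9 * n" N] by simp
  have "(\<Sum>k\<in>{9 * n..<N}. sample_constant n k)
      = (121/9) ^ (2 * n) * (\<Sum>i<n. (49/25) ^ i) * (\<Sum>k\<in>{9 * n..<N}. (25/49 :: real) ^ k)"
    by (simp add: sample_constant_def sum_distrib_left power_divide)
  also have "\<dots> \<le> (121/9) ^ (2 * n) * ((49/25) ^ n * (25/24)) * ((25/49) ^ (9 * n) * (49/24))"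
    using head tail by (intro mult_mono mult_left_mono) (auto intro!: sum_nonneg)
  also have "\<dots> = (121/9) ^ (2 * n) * ((49/25) ^ n * (25/49) ^ (9 * n)) * (1225/576)"
    by (simp add: ac_simps)
  also have "\<dots> = ((121/9) ^ 2 * (25/49) ^ 8) ^ n * (1225/576)"
    by (simp add: power_mult power_mult_distrib[symmetric]) (simp add: power_divide)
  also have "\<dots> \<le> exp (- 1/10) ^ n * 8190"
  proof (intro mult_mono power_mono)
    have "(121/9) ^ 2 * (25/49 :: real) ^ 8 \<le> 9/10"
      by (simp add: power_divide)
    also have "9/10 \<le> exp (- 1/10 :: real)"
      using exp_ge_add_one_self[of "- 1/10 :: real"] by simp
    finally show "(121/9) ^ 2 * (25/49 :: real) ^ 8 \<le> exp (- 1/10)" .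
  qed auto
  also have "\<dots> = 8190 * exp (- real n / 10)"
    by (simp add: exp_of_nat_mult[symmetric])
  finally show ?thesis .
qed

lemma integral_interval_eq_sum_unit_blocks:
  fixes h :: "real \<Rightarrow> real"
  assumes h: "continuous_on UNIV h"
  shows "integral {0..real M} h = (\<Sum>k<M. integral {0..1} (\<lambda>\<sigma>. h (real k + \<sigma>)))"
proof (induction M)
  case (Suc M)
  have "integral {0..real (Suc M)} h = integral {0..real M} h + integral {real M..real (Suc M)} h"
    by (intro Henstock_Kurzweil_Integration.integral_combine[symmetric] integrable_continuous_interval
        continuous_on_subset[OF h]) auto
  moreover have "integral {real M..real (Suc M)} h = integral {0..1} (\<lambda>\<sigma>. h (real M + \<sigma>))"
    using integral_shift_Icc_real[of 0 1 h "real M"] by (simp add: o_def add.commute)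
  ultimately show ?case
    using Suc by simp
qed simp

lemma sum_le_of_tail_dominated:
  fixes B C :: "nat \<Rightarrow> real"
  assumes B: "\<And>k. 0 \<le> B k" and dom: "\<And>k. n \<le> k \<Longrightarrow> B k \<le> C k * (\<Sum>i<n. B i)"
    and C: "(\<Sum>k\<in>{m..<N}. C k) \<le> \<epsilon>" and "0 \<le> \<epsilon>" and "n \<le> m" "m \<le> N"
  shows "(\<Sum>k<N. B k) \<le> (1 + \<epsilon>) * (\<Sum>k<m. B k)"
proof -
  have "(\<Sum>k<N. B k) = (\<Sum>k<m. B k) + (\<Sum>k\<in>{m..<N}. B k)"
    using \<open>m \<le> N\<close> by (metis atLeast0LessThan sum.atLeastLessThan_concat zero_le)
  moreover have "(\<Sum>k\<in>{m..<N}. B k) \<le> (\<Sum>k\<in>{m..<N}. C k) * (\<Sum>i<n. B i)"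
    unfolding sum_distrib_right using \<open>n \<le> m\<close> by (intro sum_mono dom) auto
  moreover have "(\<Sum>k\<in>{m..<N}. C k) * (\<Sum>i<n. B i) \<le> \<epsilon> * (\<Sum>k<m. B k)"
    using assms by (intro mult_mono C sum_mono2 sum_nonneg) auto
  ultimately show ?thesis
    by (simp add: algebra_simps)
qed

lemma exp_sum_weight_integral_le:
  assumes lam: "\<And>j. j < n \<Longrightarrow> Re (lam j) \<le> 0" and N: "9 * n \<le> N"
  shows "integral {0..real N} (exp_sum_weight n a lam)
           \<le> (1 + 8190 * exp (- real n / 10)) * integral {0..9 * real n} (exp_sum_weight n a lam)"
proof -
  let ?h = "exp_sum_weight n a lam"
  define B where "B k = integral {0..1} (\<lambda>\<sigma>. ?h (real k + \<sigma>))" for k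
  have cont: "continuous_on A (\<lambda>\<sigma>. ?h (real k + \<sigma>))" for A k
    by (intro continuous_on_compose2[OF continuous_on_exp_sum_weight] continuous_intros) auto
  have dom: "B k \<le> sample_constant n k * (\<Sum>i<n. B i)" if "n \<le> k" for k
  proof -
    have "B k \<le> integral {0..1} (\<lambda>\<sigma>. sample_constant n k * (\<Sum>i<n. ?h (real i + \<sigma>)))"
      unfolding B_def using exp_sum_weight_sample_le[OF lam that]
      by (intro integral_le integrable_continuous_interval cont continuous_intros) auto
    also have "\<dots> = sample_constant n k * (\<Sum>i<n. B i)"
      unfolding B_def by (simp add: integral_sum integrable_continuous_interval cont)
    finally show ?thesis .
  qed
  have "0 \<le> B k" for k
    unfolding B_def by (intro integral_nonneg integrable_continuous_interval cont exp_sum_weight_nonneg)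
  then have "(\<Sum>k<N. B k) \<le> (1 + 8190 * exp (- real n / 10)) * (\<Sum>k<9 * n. B k)"
    by (rule sum_le_of_tail_dominated[OF _ dom sum_sample_constant_le]) (use N in auto)
  then show ?thesis
    unfolding B_def integral_interval_eq_sum_unit_blocks[OF continuous_on_exp_sum_weight, symmetric]
    by simp
qed

lemma set_integral_nonneg_Ici_le:
  fixes h :: "real \<Rightarrow> real"
  assumes h: "continuous_on UNIV h" "\<And>t. 0 \<le> h t" and "0 \<le> c"
    and le: "\<And>N::nat. M \<le> N \<Longrightarrow> integral {0..real N} h \<le> c"
  shows "(LINT t:{0..}|lborel. h t) \<le> c"
proof (cases "set_integrable lborel {0..} h")
  case True
  have "((\<lambda>b. LINT t:{0..b}|lborel. h t) \<longlongrightarrow> (LINT t:{0..}|lborel. h t)) at_top"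
    by (rule tendsto_set_lebesgue_integral_at_top[OF _ True]) auto
  moreover have "\<forall>\<^sub>F b in at_top. (LINT t:{0..b}|lborel. h t) \<le> c"
    using eventually_ge_at_top[of "real M"]
  proof eventually_elim
    case (elim b)
    have "(LINT t:{0..b}|lborel. h t) = integral {0..b} h"
      by (intro set_borel_integral_eq_integral borel_integrable_atLeastAtMost' continuous_on_subset[OF h(1)]) auto
    also have "\<dots> \<le> integral {0..real (nat \<lceil>b\<rceil>)} h"
      using h by (intro integral_subset_le integrable_continuous_interval continuous_on_subset[OF h(1)]) auto
    also have "\<dots> \<le> c"
      using elim by (intro le) linarith
    finally show ?case .
  qed
  ultimately show ?thesis
    by (rule tendsto_upperbound) simp
next
  case False
  then show ?thesis
    using \<open>0 \<le> c\<close> by (simp add: set_lebesgue_integral_def set_integrable_def not_integrable_integral_eq)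
qed

lemma exp_sum_weight_set_integral_le:
  assumes lam: "\<And>j. j < n \<Longrightarrow> Re (lam j) \<le> 0"
  shows "(LINT t:{0..}|lborel. exp_sum_weight n a lam t)
           \<le> (1 + 8190 * exp (- real n / 10)) * (LINT t:{0..9 * real n}|lborel. exp_sum_weight n a lam t)"
proof -
  have "(LINT t:{0..9 * real n}|lborel. exp_sum_weight n a lam t) = integral {0..9 * real n} (exp_sum_weight n a lam)"
    by (simp add: set_borel_integral_eq_integral borel_integrable_atLeastAtMost' continuous_on_exp_sum_weight)
  moreover have "0 \<le> integral {0..9 * real n} (exp_sum_weight n a lam)"
    by (intro integral_nonneg integrable_continuous_interval continuous_on_exp_sum_weight exp_sum_weight_nonneg)
  then have "(LINT t:{0..}|lborel. exp_sum_weight n a lam t)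
      \<le> (1 + 8190 * exp (- real n / 10)) * integral {0..9 * real n} (exp_sum_weight n a lam)"
    by (intro set_integral_nonneg_Ici_le[OF continuous_on_exp_sum_weight exp_sum_weight_nonneg _
          exp_sum_weight_integral_le[OF lam]]) auto
  ultimately show ?thesis
    by simp
qed

lemma T_class_subset_E_minus: "T_class n \<subseteq> E_minus n"
  unfolding T_class_def E_minus_def
  by (force intro: exI[where x = "\<lambda>j. \<i> * complex_of_real (_ j)"])

lemma E_minus_weighted_integral_le:
  assumes "f \<in> E_minus n"
  shows "(LINT t:{0..}|lborel. (cmod (f t))\<^sup>2 * exp (- t))
           \<le> (1 + 8190 * exp (- real n / 10)) * (LINT t:{0..9 * real n}|lborel. (cmod (f t))\<^sup>2 * exp (- t))"
proof -
  obtain a lam where lam: "\<forall>j<n. Re (lam j) \<le> 0" and f: "f = exp_sum n a lam"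
    using assms unfolding E_minus_def exp_sum_def by blast
  show ?thesis
    using exp_sum_weight_set_integral_le[of n lam a] lam unfolding f exp_sum_weight_def by simp
qed

theorem theorem3p1:
  shows "(\<forall>(n::nat) \<ge> 1. \<forall>f \<in> E_minus n.
           (LINT t:{0..}|lborel. (cmod (f t))\<^sup>2 * exp (- t))
             \<le> (1 + 8190 * exp (- real n / 10)) *
                (LINT t:{0..9 * real n}|lborel. (cmod (f t))\<^sup>2 * exp (- t)))
       \<and> (\<forall>(n::nat) \<ge> 1. \<forall>f \<in> T_class n.
           (LINT t:{0..}|lborel. (cmod (f t))\<^sup>2 * exp (- t))
             \<le> (1 + 8190 * exp (- real n / 10)) *
                (LINT t:{0..9 * real n}|lborel. (cmod (f t))\<^sup>2 * exp (- t)))"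
  using E_minus_weighted_integral_le T_class_subset_E_minus by blast

end
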